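(* Let $\mathbf{B}$ be a real $d\times n$ matrix with nonnegative entries and $\operatorname{rank}(\mathbf{B})=k+1$, where $k\ge1$, with nonzero singular values $s_1\ge\cdots\ge s_k\ge s_{k+1}>0$, and suppose $s_k>s_{k+1}$. Let $\mathbf{U}_s\in\mathbb{R}^{d\times k}$ be the matrix whose columns are orthonormal left singular vectors of $\mathbf{B}$ corresponding to $s_1,\dots,s_k$. Consider the problem $$\min_{\mathbf{V}\in\mathbb{R}^{n\times k}}\ \|\mathbf{B}-\mathbf{U}_s\mathbf{V}^T\|_F^2\quad\text{subject to}\quad \mathbf{U}_s\mathbf{V}^T\ge 0\ \text{(entrywise)}.$$ Then this problem has a unique minimizer $\mathbf{V}^\ast$, and the resulting nonnegative approximation $\mathbf{A}=\mathbf{U}_s(\mathbf{V}^\ast)^T$ is uniquely determined by $\mathbf{B}$ (i.e., it does not depend on the choice of the singular vectors).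
   Context: $\|\cdot\|_F$ denotes the Frobenius norm; a matrix inequality $\mathbf{M}\ge 0$ means all entries of $\mathbf{M}$ are nonnegative. *)

theory Defs
  imports "HOL-Analysis.Analysis"
begin

text \<open>Matrices are HOL-Analysis matrices: real^'n^'d is a d x n matrix
  (rows indexed by 'd, columns by 'n).\<close>

definition frob_norm :: "real^'n^'m \<Rightarrow> real" where
  "frob_norm A = sqrt (\<Sum>i\<in>UNIV. \<Sum>j\<in>UNIV. (A $ i $ j)\<^sup>2)"

definition nonneg_mat :: "real^'n^'m \<Rightarrow> bool" where
  "nonneg_mat A \<longleftrightarrow> (\<forall>i j. 0 \<le> A $ i $ j)"

definition outer :: "real^'m \<Rightarrow> real^'n \<Rightarrow> real^'n^'m" where
  "outer u v = (\<chi> i j. u $ i * v $ j)"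

text \<open>Compact SVD with r+1 nonzero singular values (indices 0..r):
  B = sum_{i=0..r} s_i u_i v_i^T with orthonormal u_i, orthonormal v_i and
  s_0 \<ge> s_1 \<ge> ... \<ge> s_r > 0.\<close>
definition compact_svd ::
  "real^'n^'d \<Rightarrow> nat \<Rightarrow> (nat \<Rightarrow> real^'d) \<Rightarrow> (nat \<Rightarrow> real^'n) \<Rightarrow> (nat \<Rightarrow> real) \<Rightarrow> bool" where
  "compact_svd B r u v s \<longleftrightarrow>
     (\<forall>i\<le>r. \<forall>j\<le>r. u i \<bullet> u j = (if i = j then 1 else 0)) \<and>
     (\<forall>i\<le>r. \<forall>j\<le>r. v i \<bullet> v j = (if i = j then 1 else 0)) \<and>
     (\<forall>i j. i \<le> j \<and> j \<le> r \<longrightarrow> s j \<le> s i) \<and>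
     0 < s r \<and>
     B = (\<Sum>i\<le>r. s i *\<^sub>R outer (u i) (v i))"

text \<open>U (d x k, k = CARD('k)) consists of orthonormal left singular vectors of B
  corresponding to the k largest singular values s_1..s_k, where B has k+1 nonzero
  singular values: its columns are u_0..u_{k-1} of some compact SVD of B.\<close>
definition top_left_sv :: "real^'n^'d \<Rightarrow> real^'k^'d \<Rightarrow> bool" where
  "top_left_sv B U \<longleftrightarrow>
     (\<exists>u v s \<sigma>. compact_svd B CARD('k) u v s \<and>
        bij_betw \<sigma> (UNIV :: 'k set) {..<CARD('k)} \<and>
        (\<forall>j. column j U = u (\<sigma> j)))"

definition is_constrained_min :: "real^'n^'d \<Rightarrow> real^'k^'d \<Rightarrow> real^'k^'n \<Rightarrow> bool" where
  "is_constrained_min B U V \<longleftrightarrow>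
     nonneg_mat (U ** transpose V) \<and>
     (\<forall>W :: real^'k^'n. nonneg_mat (U ** transpose W) \<longrightarrow>
        (frob_norm (B - U ** transpose V))\<^sup>2 \<le> (frob_norm (B - U ** transpose W))\<^sup>2)"

end

theory Submission
  imports Defs
begin

text \<open>The feasible products \<open>U V\<^sup>T\<close> are exactly the nonnegative matrices fixed by the
  projection \<open>P = U U\<^sup>T\<close>; this is a closed convex set containing \<open>0\<close>, so it has a unique
  point nearest to \<open>B\<close>, and \<open>V\<close> is recovered from it because \<open>U\<^sup>T U = I\<close>.
  The gap \<open>s\<^sub>k > s\<^sub>k\<^sub>+\<^sub>1\<close> makes \<open>P\<close> independent of the chosen singular vectors: the last
  singular value of any compact SVD of \<open>B\<close> is \<open>s\<^sub>k\<^sub>+\<^sub>1\<close>, so its last left singular vector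
  is \<open>\<plusminus>u\<^sub>k\<^sub>+\<^sub>1\<close>, and the others, being orthogonal to it, span the same space as
  \<open>u\<^sub>1, \<dots>, u\<^sub>k\<close>.\<close>

lemma frob_norm_eq_norm: "frob_norm A = norm A"
  unfolding frob_norm_def norm_vec_def L2_set_def
  by (simp add: real_norm_def power2_abs sum_nonneg)

lemma sum_outer_mult_vec:
  "(\<Sum>i\<in>I. c i *\<^sub>R outer (a i) (b i)) *v x = (\<Sum>i\<in>I. (c i * (b i \<bullet> x)) *\<^sub>R a i)"
  by (simp add: vec_eq_iff matrix_vector_mult_def sum_component outer_def inner_vec_def
      sum_distrib_left sum_distrib_right mult_ac sum.swap[of _ UNIV I])

lemma transpose_sum_outer_mult_vec:
  "transpose (\<Sum>i\<in>I. c i *\<^sub>R outer (a i) (b i)) *v x = (\<Sum>i\<in>I. (c i * (a i \<bullet> x)) *\<^sub>R b i)"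
  by (simp add: vec_eq_iff matrix_vector_mult_def transpose_def sum_component outer_def
      inner_vec_def sum_distrib_left sum_distrib_right mult_ac sum.swap[of _ UNIV I])

lemma inner_orthonormal_sum:
  assumes "finite I" "\<forall>i\<in>I. \<forall>j\<in>I. e i \<bullet> e j = (if i = j then 1 else 0)" "m \<in> I"
  shows "e m \<bullet> (\<Sum>i\<in>I. a i *\<^sub>R e i) = (a m :: real)"
proof -
  have "e m \<bullet> (\<Sum>i\<in>I. a i *\<^sub>R e i) = (\<Sum>i\<in>I. a i * (e m \<bullet> e i))"
    by (simp add: inner_sum_right)
  also have "\<dots> = (\<Sum>i\<in>I. if i = m then a i else 0)"
    using assms by (intro sum.cong) auto
  also have "\<dots> = a m" using assms by simp
  finally show ?thesis .
qed

lemma sum_outer_eq_if_mutual_expansion: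
  fixes u w :: "'a \<Rightarrow> real^'d"
  assumes "finite I" "finite J"
    and w_exp: "\<And>j. j \<in> J \<Longrightarrow> w j = (\<Sum>i\<in>I. (u i \<bullet> w j) *\<^sub>R u i)"
    and u_exp: "\<And>i. i \<in> I \<Longrightarrow> u i = (\<Sum>j\<in>J. (w j \<bullet> u i) *\<^sub>R w j)"
  shows "(\<Sum>j\<in>J. outer (w j) (w j)) = (\<Sum>i\<in>I. outer (u i) (u i))"
proof (rule matrix_eq[THEN iffD2], rule allI)
  fix x :: "real^'d"
  have outer_mult_vec: "(\<Sum>i\<in>K. outer (e i) (e i)) *v x = (\<Sum>i\<in>K. (e i \<bullet> x) *\<^sub>R e i)"
    for e :: "'a \<Rightarrow> real^'d" and K
    using sum_outer_mult_vec[of "\<lambda>_. 1" e e K x] by simp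
  have u_x: "u i \<bullet> x = (\<Sum>j\<in>J. (w j \<bullet> x) * (u i \<bullet> w j))" if "i \<in> I" for i
  proof -
    have "u i \<bullet> x = (\<Sum>j\<in>J. (w j \<bullet> u i) * (w j \<bullet> x))"
      by (subst u_exp[OF that]) (simp add: inner_sum_left)
    then show ?thesis by (simp add: inner_commute mult.commute)
  qed
  have "(\<Sum>j\<in>J. outer (w j) (w j)) *v x = (\<Sum>j\<in>J. (w j \<bullet> x) *\<^sub>R w j)"
    by (simp add: outer_mult_vec)
  also have "\<dots> = (\<Sum>j\<in>J. (w j \<bullet> x) *\<^sub>R (\<Sum>i\<in>I. (u i \<bullet> w j) *\<^sub>R u i))"
    by (rule sum.cong[OF refl], rule arg_cong[where f="scaleR _"], rule w_exp)
  also have "\<dots> = (\<Sum>j\<in>J. \<Sum>i\<in>I. ((w j \<bullet> x) * (u i \<bullet> w j)) *\<^sub>R u i)"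
    by (simp add: scaleR_sum_right)
  also have "\<dots> = (\<Sum>i\<in>I. (\<Sum>j\<in>J. (w j \<bullet> x) * (u i \<bullet> w j)) *\<^sub>R u i)"
    by (subst sum.swap) (simp add: scaleR_sum_left)
  also have "\<dots> = (\<Sum>i\<in>I. (u i \<bullet> x) *\<^sub>R u i)"
    using u_x by (intro sum.cong) auto
  also have "\<dots> = (\<Sum>i\<in>I. outer (u i) (u i)) *v x"
    by (simp add: outer_mult_vec)
  finally show "(\<Sum>j\<in>J. outer (w j) (w j)) *v x = (\<Sum>i\<in>I. outer (u i) (u i)) *v x" .
qed

section \<open>Compact singular value decompositions\<close>

context
  fixes B :: "real^'n^'d" and r :: nat
    and u :: "nat \<Rightarrow> real^'d" and v :: "nat \<Rightarrow> real^'n" and s :: "nat \<Rightarrow> real"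
  assumes svd: "compact_svd B r u v s"
begin

lemma compact_svd_left_orthonormal:
  "\<forall>i\<in>{..r}. \<forall>j\<in>{..r}. u i \<bullet> u j = (if i = j then 1 else 0)"
  using svd unfolding compact_svd_def by auto

lemma compact_svd_right_orthonormal:
  "\<forall>i\<in>{..r}. \<forall>j\<in>{..r}. v i \<bullet> v j = (if i = j then 1 else 0)"
  using svd unfolding compact_svd_def by auto

lemma compact_svd_left_nonzero: "i \<le> r \<Longrightarrow> u i \<noteq> 0"
  using compact_svd_left_orthonormal by force

lemma compact_svd_antimono: "i \<le> j \<Longrightarrow> j \<le> r \<Longrightarrow> s j \<le> s i"
  using svd unfolding compact_svd_def by auto

lemma compact_svd_pos: "i \<le> r \<Longrightarrow> 0 < s i"
  using compact_svd_antimono[of i r] svd unfolding compact_svd_def by force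

lemma compact_svd_mult_vec: "B *v x = (\<Sum>i\<le>r. (s i * (v i \<bullet> x)) *\<^sub>R u i)"
  using svd unfolding compact_svd_def by (simp add: sum_outer_mult_vec)

lemma compact_svd_transpose_mult_vec:
  "transpose B *v x = (\<Sum>i\<le>r. (s i * (u i \<bullet> x)) *\<^sub>R v i)"
proof -
  have "B = (\<Sum>i\<le>r. s i *\<^sub>R outer (u i) (v i))" using svd unfolding compact_svd_def by blast
  then show ?thesis by (simp only: transpose_sum_outer_mult_vec)
qed

lemma compact_svd_gram_mult_vec:
  "B *v (transpose B *v x) = (\<Sum>i\<le>r. ((s i)\<^sup>2 * (u i \<bullet> x)) *\<^sub>R u i)"
  unfolding compact_svd_transpose_mult_vec compact_svd_mult_vec
  by (intro sum.cong refl)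
     (simp add: inner_orthonormal_sum[OF _ compact_svd_right_orthonormal] power2_eq_square)

lemma compact_svd_inner_gram:
  "a \<le> r \<Longrightarrow> u a \<bullet> (B *v (transpose B *v x)) = (s a)\<^sup>2 * (u a \<bullet> x)"
  unfolding compact_svd_gram_mult_vec
  using inner_orthonormal_sum[OF _ compact_svd_left_orthonormal] by simp

lemma compact_svd_gram_left_vector:
  assumes "a \<le> r"
  shows "B *v (transpose B *v u a) = (s a)\<^sup>2 *\<^sub>R u a"
proof -
  have "(\<Sum>i\<le>r. ((s i)\<^sup>2 * (u i \<bullet> u a)) *\<^sub>R u i) = (\<Sum>i\<le>r. if i = a then (s a)\<^sup>2 *\<^sub>R u a else 0)"
    using compact_svd_left_orthonormal assms by (intro sum.cong) auto
  then show ?thesis unfolding compact_svd_gram_mult_vec using assms by simp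
qed

end

context
  fixes B :: "real^'n^'d" and r :: nat
    and u :: "nat \<Rightarrow> real^'d" and v :: "nat \<Rightarrow> real^'n" and s :: "nat \<Rightarrow> real"
    and w :: "nat \<Rightarrow> real^'d" and v' :: "nat \<Rightarrow> real^'n" and t :: "nat \<Rightarrow> real"
  assumes svd_u: "compact_svd B r u v s" and svd_w: "compact_svd B r w v' t"
begin

lemma compact_svd_left_expansion:
  assumes "j \<le> r"
  shows "w j = (\<Sum>i\<le>r. (u i \<bullet> w j) *\<^sub>R u i)"
proof -
  have "B *v v' j = (\<Sum>i\<le>r. if i = j then t j *\<^sub>R w j else 0)"
    unfolding compact_svd_mult_vec[OF svd_w]
    using compact_svd_right_orthonormal[OF svd_w] assms by (intro sum.cong) auto
  then have "w j = (1 / t j) *\<^sub>R (B *v v' j)"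
    using compact_svd_pos[OF svd_w assms] assms by simp
  then have w_j: "w j = (\<Sum>i\<le>r. ((1 / t j) * (s i * (v i \<bullet> v' j))) *\<^sub>R u i)"
    by (simp add: compact_svd_mult_vec[OF svd_u] scaleR_sum_right)
  then have "u i \<bullet> w j = (1 / t j) * (s i * (v i \<bullet> v' j))" if "i \<le> r" for i
    using inner_orthonormal_sum[OF _ compact_svd_left_orthonormal[OF svd_u]] that by simp
  then show ?thesis by (subst (1) w_j) (intro sum.cong; simp)
qed

text \<open>Both vectors are eigenvectors of \<open>B B\<^sup>T\<close>, with eigenvalues \<open>s\<^sub>i\<^sup>2\<close> and \<open>t\<^sub>j\<^sup>2\<close>.\<close>
lemma compact_svd_values_eq_if_inner_nonzero:
  assumes "i \<le> r" "j \<le> r" "u i \<bullet> w j \<noteq> 0"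
  shows "t j = s i"
proof -
  have "(t j)\<^sup>2 * (u i \<bullet> w j) = (s i)\<^sup>2 * (u i \<bullet> w j)"
    using compact_svd_inner_gram[OF svd_u assms(1), of "w j"]
      compact_svd_gram_left_vector[OF svd_w assms(2)] by simp
  then have "(t j)\<^sup>2 = (s i)\<^sup>2" using assms(3) by simp
  then show ?thesis
    using compact_svd_pos[OF svd_u assms(1)] compact_svd_pos[OF svd_w assms(2)]
    by (simp add: power2_eq_iff_nonneg)
qed

lemma compact_svd_value_in_values:
  assumes "j \<le> r"
  obtains i where "i \<le> r" "t j = s i"
proof -
  have "\<exists>i\<le>r. u i \<bullet> w j \<noteq> 0"
  proof (rule ccontr)
    assume "\<not> (\<exists>i\<le>r. u i \<bullet> w j \<noteq> 0)"
    then have "(\<Sum>i\<le>r. (u i \<bullet> w j) *\<^sub>R u i) = 0" by simp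
    with compact_svd_left_expansion[OF assms] have "w j = 0" by (rule trans)
    then show False using compact_svd_left_nonzero[OF svd_w assms] by simp
  qed
  then show ?thesis using compact_svd_values_eq_if_inner_nonzero assms that by blast
qed

end

lemma compact_svd_last_value_eq:
  assumes "compact_svd B r u v s" "compact_svd B r w v' t"
  shows "t r = s r"
proof -
  obtain i where i: "i \<le> r" "t r = s i" using compact_svd_value_in_values[OF assms] by blast
  obtain j where j: "j \<le> r" "s r = t j" using compact_svd_value_in_values[OF assms(2,1)] by blast
  have "s r \<le> s i" "t r \<le> t j"
    using compact_svd_antimono[OF assms(1) i(1)] compact_svd_antimono[OF assms(2) j(1)] by simp_all
  then show ?thesis using i j by linarith
qed

context
  fixes B :: "real^'n^'d" and r :: nat
    and u :: "nat \<Rightarrow> real^'d" and v :: "nat \<Rightarrow> real^'n" and s :: "nat \<Rightarrow> real"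
    and w :: "nat \<Rightarrow> real^'d" and v' :: "nat \<Rightarrow> real^'n" and t :: "nat \<Rightarrow> real"
  assumes svd_u: "compact_svd B r u v s" and svd_w: "compact_svd B r w v' t"
    and gap: "s (r - 1) > s r"
begin

lemma compact_svd_last_left_vector: "w r = (u r \<bullet> w r) *\<^sub>R u r"
proof -
  have "u i \<bullet> w r = 0" if "i < r" for i
  proof (rule ccontr)
    assume "u i \<bullet> w r \<noteq> 0"
    then have "s i = s r"
      using compact_svd_values_eq_if_inner_nonzero[OF svd_u svd_w, of i r] that
        compact_svd_last_value_eq[OF svd_u svd_w] by simp
    moreover have "s (r - 1) \<le> s i" using compact_svd_antimono[OF svd_u] that by simp
    ultimately show False using gap by simp
  qed
  then have "(\<Sum>i\<le>r. (u i \<bullet> w r) *\<^sub>R u i) = (u r \<bullet> w r) *\<^sub>R u r"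
    by (subst sum.remove[of _ r]) auto
  with compact_svd_left_expansion[OF svd_u svd_w order_refl] show ?thesis by (rule trans)
qed

lemma compact_svd_inner_last_eq_0:
  assumes "j < r"
  shows "u r \<bullet> w j = 0" and "w r \<bullet> u j = 0"
proof -
  let ?c = "u r \<bullet> w r"
  have "?c \<noteq> 0"
  proof
    assume "?c = 0"
    then have "w r = 0" by (subst compact_svd_last_left_vector) simp
    then show False using compact_svd_left_nonzero[OF svd_w] by simp
  qed
  moreover have "w j \<bullet> w r = 0"
    using compact_svd_left_orthonormal[OF svd_w] assms by auto
  then have "?c * (u r \<bullet> w j) = 0"
    by (subst (asm) compact_svd_last_left_vector) (simp add: inner_commute)
  ultimately show "u r \<bullet> w j = 0" by simp
  have "u r \<bullet> u j = 0" using compact_svd_left_orthonormal[OF svd_u] assms by auto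
  then show "w r \<bullet> u j = 0" by (subst compact_svd_last_left_vector) simp
qed

lemma compact_svd_top_projection_eq:
  "(\<Sum>j<r. outer (w j) (w j)) = (\<Sum>i<r. outer (u i) (u i))"
proof (rule sum_outer_eq_if_mutual_expansion)
  have drop_last: "(\<Sum>i\<le>r. f i) = (\<Sum>i<r. f i)" if "f r = 0" for f :: "nat \<Rightarrow> real^'d"
    using that by (simp add: lessThan_Suc_atMost[symmetric])
  show "w j = (\<Sum>i<r. (u i \<bullet> w j) *\<^sub>R u i)" if "j \<in> {..<r}" for j
  proof -
    have "w j = (\<Sum>i\<le>r. (u i \<bullet> w j) *\<^sub>R u i)"
      using that by (intro compact_svd_left_expansion[OF svd_u svd_w]) simp
    also have "\<dots> = (\<Sum>i<r. (u i \<bullet> w j) *\<^sub>R u i)"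
      using compact_svd_inner_last_eq_0(1) that by (intro drop_last) simp
    finally show ?thesis .
  qed
  show "u i = (\<Sum>j<r. (w j \<bullet> u i) *\<^sub>R w j)" if "i \<in> {..<r}" for i
  proof -
    have "u i = (\<Sum>j\<le>r. (w j \<bullet> u i) *\<^sub>R w j)"
      using that by (intro compact_svd_left_expansion[OF svd_w svd_u]) simp
    also have "\<dots> = (\<Sum>j<r. (w j \<bullet> u i) *\<^sub>R w j)"
      using compact_svd_inner_last_eq_0(2) that by (intro drop_last) simp
    finally show ?thesis .
  qed
qed simp_all

end

lemma top_left_sv_obtain:
  fixes U :: "real^'k::finite^'d"
  assumes "top_left_sv B U"
  obtains w v' t where "compact_svd B CARD('k) w v' t"
    "transpose U ** U = mat 1" "U ** transpose U = (\<Sum>i<CARD('k). outer (w i) (w i))"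
proof -
  obtain w v' t \<sigma> where svd: "compact_svd B CARD('k) w v' t"
    and bij: "bij_betw \<sigma> (UNIV :: 'k set) {..<CARD('k)}" and col: "\<forall>j. column j U = w (\<sigma> j)"
    using assms unfolding top_left_sv_def by blast
  have U_entry: "U $ a $ j = w (\<sigma> j) $ a" for a j
    using col by (metis column_def vec_lambda_beta)
  have "column i U \<bullet> column j U = (if i = j then 1 else 0)" for i j
  proof -
    have "\<sigma> i < CARD('k)" "\<sigma> j < CARD('k)" "\<sigma> i = \<sigma> j \<longleftrightarrow> i = j"
      using bij unfolding bij_betw_def inj_on_def by auto
    then show ?thesis using compact_svd_left_orthonormal[OF svd] col by auto
  qed
  then have "transpose U ** U = mat 1"
    unfolding matrix_mult_transpose_dot_column mat_def by simp
  moreover have "U ** transpose U = (\<Sum>i<CARD('k). outer (w i) (w i))"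
  proof -
    have "U ** transpose U = (\<Sum>j\<in>UNIV. outer (w (\<sigma> j)) (w (\<sigma> j)))"
      by (simp add: vec_eq_iff matrix_matrix_mult_def transpose_def outer_def sum_component U_entry)
    then show ?thesis using sum.reindex_bij_betw[OF bij, of "\<lambda>i. outer (w i) (w i)"] by simp
  qed
  ultimately show ?thesis using svd that by blast
qed

section \<open>Nearest nonnegative matrix in the range of a projection\<close>

definition nonneg_fixpoints :: "real^'d^'d \<Rightarrow> (real^'n^'d) set" where
  "nonneg_fixpoints P = {X. nonneg_mat X \<and> P ** X = X}"

lemma closed_nonneg_fixpoints: "closed (nonneg_fixpoints P)"
  unfolding nonneg_fixpoints_def nonneg_mat_def matrix_matrix_mult_def
  by (intro closed_Collect_conj closed_Collect_all closed_Collect_le closed_Collect_eq)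
     (auto intro!: continuous_intros)

lemma convex_nonneg_fixpoints: "convex (nonneg_fixpoints P)"
  unfolding convex_def nonneg_fixpoints_def nonneg_mat_def
  by (auto simp: matrix_add_ldistrib matrix_scalar_ac scalar_matrix_assoc[symmetric])

lemma zero_in_nonneg_fixpoints: "0 \<in> nonneg_fixpoints P"
  unfolding nonneg_fixpoints_def nonneg_mat_def by simp

context
  fixes U :: "real^'k^'d"
  assumes orth: "transpose U ** U = mat 1"
begin

lemma fixpoint_projection_iff_range:
  "(U ** transpose U) ** X = X \<longleftrightarrow> (\<exists>W. X = U ** transpose W)"
proof
  assume "(U ** transpose U) ** X = X"
  then have "X = U ** transpose (transpose X ** U)"
    by (simp add: matrix_transpose_mul matrix_mul_assoc)
  then show "\<exists>W. X = U ** transpose W" by blast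
next
  assume "\<exists>W. X = U ** transpose W"
  then obtain W where "X = U ** transpose W" by blast
  moreover have "(U ** transpose U) ** (U ** transpose W) = U ** ((transpose U ** U) ** transpose W)"
    by (simp add: matrix_mul_assoc)
  ultimately show "(U ** transpose U) ** X = X" using orth by simp
qed

lemma is_constrained_min_iff_nearest:
  "is_constrained_min B U V \<longleftrightarrow>
     U ** transpose V \<in> nonneg_fixpoints (U ** transpose U) \<and>
     (\<forall>Y\<in>nonneg_fixpoints (U ** transpose U). dist B (U ** transpose V) \<le> dist B Y)"
proof -
  have frob_le_iff: "(frob_norm (B - X))\<^sup>2 \<le> (frob_norm (B - Y))\<^sup>2 \<longleftrightarrow> dist B X \<le> dist B Y" for X Y
    by (simp add: frob_norm_eq_norm dist_norm)
  have feasible_iff: "U ** transpose W \<in> nonneg_fixpoints (U ** transpose U) \<longleftrightarrow>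
      nonneg_mat (U ** transpose W)" for W
    unfolding nonneg_fixpoints_def fixpoint_projection_iff_range by auto
  have ball_iff: "(\<forall>Y\<in>nonneg_fixpoints (U ** transpose U). P Y) \<longleftrightarrow>
      (\<forall>W. nonneg_mat (U ** transpose W) \<longrightarrow> P (U ** transpose W))" for P
    unfolding nonneg_fixpoints_def fixpoint_projection_iff_range by auto
  show ?thesis
    unfolding is_constrained_min_def frob_le_iff feasible_iff ball_iff ..
qed

lemma ex1_is_constrained_min: "\<exists>!V. is_constrained_min B U V"
proof -
  let ?F = "nonneg_fixpoints (U ** transpose U) :: (real^'n^'d) set"
  obtain X where X: "X \<in> ?F" "\<And>Y. Y \<in> ?F \<Longrightarrow> dist B X \<le> dist B Y"
    using distance_attains_inf[OF closed_nonneg_fixpoints, of _ B] zero_in_nonneg_fixpoints by blast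
  then obtain W where "X = U ** transpose W"
    using fixpoint_projection_iff_range unfolding nonneg_fixpoints_def by blast
  then have min_W: "is_constrained_min B U W"
    using X by (simp add: is_constrained_min_iff_nearest)
  show ?thesis
  proof (rule ex1I[where P = "is_constrained_min B U", OF min_W])
    fix V assume "is_constrained_min B U V"
    then have "U ** transpose V = U ** transpose W"
      using min_W unfolding is_constrained_min_iff_nearest
      by (intro any_closest_point_unique[OF convex_nonneg_fixpoints closed_nonneg_fixpoints]) auto
    then have "transpose U ** (U ** transpose V) = transpose U ** (U ** transpose W)" by simp
    then show "V = W" using orth by (simp add: matrix_mul_assoc)
  qed
qed

end

lemma is_constrained_min_product_eq:
  fixes U U' :: "real^'k^'d"
  assumes "transpose U ** U = mat 1" "transpose U' ** U' = mat 1"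
    and "U ** transpose U = U' ** transpose U'"
    and "is_constrained_min B U V" "is_constrained_min B U' V'"
  shows "U ** transpose V = U' ** transpose V'"
  using assms(4,5) assms(3)
  unfolding is_constrained_min_iff_nearest[OF assms(1)] is_constrained_min_iff_nearest[OF assms(2)]
  by (intro any_closest_point_unique[OF convex_nonneg_fixpoints closed_nonneg_fixpoints]) auto

theorem proposition2:
  fixes B :: "real^'n^'d"
  assumes nonneg: "nonneg_mat B"
    and rank: "rank B = CARD('k::finite) + 1"
    and gap: "\<exists>u v s. compact_svd B CARD('k) u v s \<and> s (CARD('k) - 1) > s CARD('k)"
  shows "(\<forall>U :: real^'k^'d. top_left_sv B U \<longrightarrow> (\<exists>!V. is_constrained_min B U V)) \<and>
         (\<exists>A. \<forall>(U :: real^'k^'d) V. top_left_sv B U \<and> is_constrained_min B U V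
                 \<longrightarrow> U ** transpose V = A)"
proof -
  obtain u v s where svd: "compact_svd B CARD('k) u v s" and gap: "s (CARD('k) - 1) > s CARD('k)"
    using gap by blast
  let ?P = "\<Sum>i<CARD('k). outer (u i) (u i)"
  have U: "transpose U ** U = mat 1 \<and> U ** transpose U = ?P"
    if U_sv: "top_left_sv B U" for U :: "real^'k^'d"
  proof -
    obtain w v' t where "compact_svd B CARD('k) w v' t"
      "transpose U ** U = mat 1" "U ** transpose U = (\<Sum>i<CARD('k). outer (w i) (w i))"
      by (rule top_left_sv_obtain[OF U_sv])
    then show ?thesis using compact_svd_top_projection_eq[OF svd _ gap] by simp
  qed
  have product_eq: "U ** transpose V = U' ** transpose V'"
    if "top_left_sv B U" "is_constrained_min B U V"
       "top_left_sv B U'" "is_constrained_min B U' V'" for U U' :: "real^'k^'d" and V V'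
    using is_constrained_min_product_eq[where U=U and U'=U' and B=B and V=V and V'=V']
      U[OF that(1)] U[OF that(3)] that(2,4) by simp
  have "\<exists>A. \<forall>(U :: real^'k^'d) V. top_left_sv B U \<and> is_constrained_min B U V
          \<longrightarrow> U ** transpose V = A"
  proof (cases "\<exists>(U :: real^'k^'d) V. top_left_sv B U \<and> is_constrained_min B U V")
    case True
    then obtain U0 :: "real^'k^'d" and V0 where "top_left_sv B U0" "is_constrained_min B U0 V0"
      by blast
    then show ?thesis using product_eq by blast
  qed blast
  then show ?thesis using U ex1_is_constrained_min by blast
qed

end
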